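(* Let $L_x, L_y>0$, $L_{xy}\geq 0$, $\mu_x,\mu_y$ with $0<\mu_x\le L_x$, $0<\mu_y\le L_y$, and let $F\in\mathcal{F}(L_x, L_y, L_{xy}, \mu_x, \mu_y)$ (defined in the context). Let $(x^\star,y^\star)$ be the unique saddle point of $F$. Set $L=\max\{L_x, L_y\}$ and $\mu=\min\{\mu_x, \mu_y\}$. If $t\in\left(0, \tfrac{2\mu}{\mu L+L_{xy}^2}\right)$, then for any $(x^1,y^1)\in\mathbb{R}^n\times\mathbb{R}^m$, the point $(x^2,y^2)$ obtained by one step of the gradient descent-ascent method with step length $t$, i.e. $x^{2}=x^1-t\nabla_x F(x^1, y^1)$, $y^{2}=y^1+t\nabla_y F(x^1, y^1)$, satisfies $$ \|x^2-x^\star\|^2+\|y^2-y^\star\|^2\leq \alpha\left(\|x^1-x^\star\|^2+\|y^1-y^\star\|^2\right), $$ where $$ \alpha=1+\tfrac{1}{2}\left(L^2+\mu^2+2L_{xy}^2\right)t^2-(L+\mu)t +\tfrac{1}{2}(L-\mu)t\sqrt{(Lt + \mu t - 2)^2 + 4L_{xy}^2t^2}. $$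
   Context: $F:\mathbb{R}^n\times\mathbb{R}^m\to\mathbb{R}$ is differentiable. $\mathcal{F}(L_x, L_y, L_{xy}, \mu_x, \mu_y)$ denotes the set of such $F$ satisfying, for all $x,x_1,x_2\in\mathbb{R}^n$, $y,y_1,y_2\in\mathbb{R}^m$: $\|\nabla_x F(x_2, y)-\nabla_x F(x_1, y)\|\leq L_x\|x_2-x_1\|$; $\|\nabla_y F(x, y_2)-\nabla_y F(x, y_1)\|\leq L_y\|y_2-y_1\|$; $\|\nabla_x F(x, y_2)-\nabla_x F(x, y_1)\|\leq L_{xy}\|y_2-y_1\|$; $\|\nabla_y F(x_2, y)-\nabla_y F(x_1, y)\|\leq L_{xy}\|x_2-x_1\|$; and $F(\cdot, y)-\tfrac{\mu_x}{2}\|\cdot\|^2$ is convex for every $y$ and $F(x,\cdot)+\tfrac{\mu_y}{2}\|\cdot\|^2$ is concave for every $x$. A saddle point is $(x^\star,y^\star)$ with $F(x^\star, y)\leq F(x^\star, y^\star)\leq F(x, y^\star)$ for all $x,y$; when $\mu_x,\mu_y>0$ it exists and is unique. *)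

theory Defs
  imports "HOL-Analysis.Analysis"
begin

definition grad_x :: "('n::euclidean_space \<Rightarrow> 'm::euclidean_space \<Rightarrow> real) \<Rightarrow> 'n \<Rightarrow> 'm \<Rightarrow> 'n" where
  "grad_x F x y = (THE g. ((\<lambda>u. F u y) has_derivative (\<lambda>h. g \<bullet> h)) (at x))"

definition grad_y :: "('n::euclidean_space \<Rightarrow> 'm::euclidean_space \<Rightarrow> real) \<Rightarrow> 'n \<Rightarrow> 'm \<Rightarrow> 'm" where
  "grad_y F x y = (THE g. ((\<lambda>v. F x v) has_derivative (\<lambda>h. g \<bullet> h)) (at y))"

definition func_class ::
  "real \<Rightarrow> real \<Rightarrow> real \<Rightarrow> real \<Rightarrow> real \<Rightarrow> ('n::euclidean_space \<Rightarrow> 'm::euclidean_space \<Rightarrow> real) set" where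
  "func_class Lx Ly Lxy mux muy = {F.
     (\<forall>p. (\<lambda>(x, y). F x y) differentiable (at p)) \<and>
     (\<forall>x1 x2 y. norm (grad_x F x2 y - grad_x F x1 y) \<le> Lx * norm (x2 - x1)) \<and>
     (\<forall>x y1 y2. norm (grad_y F x y2 - grad_y F x y1) \<le> Ly * norm (y2 - y1)) \<and>
     (\<forall>x y1 y2. norm (grad_x F x y2 - grad_x F x y1) \<le> Lxy * norm (y2 - y1)) \<and>
     (\<forall>x1 x2 y. norm (grad_y F x2 y - grad_y F x1 y) \<le> Lxy * norm (x2 - x1)) \<and>
     (\<forall>y. convex_on UNIV (\<lambda>x. F x y - mux / 2 * (norm x)\<^sup>2)) \<and>
     (\<forall>x. concave_on UNIV (\<lambda>y. F x y + muy / 2 * (norm y)\<^sup>2))}"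

definition is_saddle_point :: "('n \<Rightarrow> 'm \<Rightarrow> real) \<Rightarrow> 'n \<Rightarrow> 'm \<Rightarrow> bool" where
  "is_saddle_point F xs ys \<longleftrightarrow> (\<forall>x y. F xs y \<le> F xs ys \<and> F xs ys \<le> F x ys)"

end

theory Submission
  imports Defs
begin

(* Let z = (x, y) and z* the saddle point. F(., y) and -F(x, .) are L-smooth and mu-strongly
   convex, so the interpolation inequalities of Taylor, Hendrickx and Glineur hold between x1 and
   x* at the two levels y1, y*, and between y1 and y* at the levels x1, x*; the changes of the
   gradients across levels are bounded by Lxy. Multiplied by 8 (L - mu) S, where
   S = sqrt ((L t + mu t - 2)^2 + 4 Lxy^2 t^2), the gap alpha |z1 - z*|^2 - |z2 - z*|^2 is a
   nonnegative combination of these eight inequalities and four cross bounds plus a sum of squares.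
   This certificate needs L > mu and Lxy > 0; the degenerate cases follow by continuity. *)

lemma the_gradient_eq:
  fixes f :: "'a::real_inner \<Rightarrow> real"
  assumes "(f has_derivative (\<lambda>h. g \<bullet> h)) (at x)"
  shows "(THE g. (f has_derivative (\<lambda>h. g \<bullet> h)) (at x)) = g"
proof (rule the_equality)
  fix g' assume "(f has_derivative (\<lambda>h. g' \<bullet> h)) (at x)"
  with assms have "(\<lambda>h. g \<bullet> h) = (\<lambda>h. g' \<bullet> h)" by (rule has_derivative_unique)
  then show "g' = g" by (metis vector_eq_rdot)
qed (fact assms)

lemma has_derivative_the_gradient:
  fixes f :: "'a::euclidean_space \<Rightarrow> real"
  assumes "(f has_derivative D) (at x)"
  shows "(f has_derivative (\<lambda>h. (THE g. (f has_derivative (\<lambda>h. g \<bullet> h)) (at x)) \<bullet> h)) (at x)"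
proof -
  have "linear D" using assms by (rule has_derivative_linear)
  then have "D = (\<lambda>h. adjoint D 1 \<bullet> h)" by (simp add: fun_eq_iff adjoint_works inner_commute)
  with assms have "(f has_derivative (\<lambda>h. adjoint D 1 \<bullet> h)) (at x)" by metis
  then show ?thesis by (simp add: the_gradient_eq)
qed

lemma gradient_eq_0_at_minimum:
  fixes f :: "'a::real_inner \<Rightarrow> real"
  assumes "(f has_derivative (\<lambda>h. g \<bullet> h)) (at x)" and "\<And>y. f x \<le> f y"
  shows "g = 0"
proof -
  have "(\<lambda>h. g \<bullet> h) = (\<lambda>h. 0)"
    using assms by (intro has_derivative_local_min[OF assms(1)]) (auto intro: always_eventually)
  then show ?thesis by (metis inner_eq_zero_iff)
qed

lemma lipschitz_gradient_upper_bound: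
  fixes f :: "'a::real_inner \<Rightarrow> real"
  assumes deriv: "\<And>x. (f has_derivative (\<lambda>h. g x \<bullet> h)) (at x)"
    and lip: "\<And>x y. norm (g x - g y) \<le> L * norm (x - y)"
  shows "f z \<le> f x + g x \<bullet> (z - x) + L / 2 * (norm (z - x))\<^sup>2"
proof -
  define d where "d = z - x"
  define \<psi> where "\<psi> s = f (x + s *\<^sub>R d) - s * (g x \<bullet> d) - L / 2 * s\<^sup>2 * (norm d)\<^sup>2" for s :: real
  have \<psi>_deriv: "(\<psi> has_real_derivative (g (x + s *\<^sub>R d) - g x) \<bullet> d - L * s * (norm d)\<^sup>2) (at s)" for s
  proof -
    have "((\<lambda>s. f (x + s *\<^sub>R d)) has_derivative (\<lambda>h. g (x + s *\<^sub>R d) \<bullet> (h *\<^sub>R d))) (at s)"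
      by (rule has_derivative_compose[OF _ deriv]) (auto intro!: derivative_eq_intros)
    then have "((\<lambda>s. f (x + s *\<^sub>R d)) has_real_derivative g (x + s *\<^sub>R d) \<bullet> d) (at s)"
      unfolding has_field_derivative_def by (rule has_derivative_eq_rhs) (simp add: fun_eq_iff)
    then show ?thesis
      unfolding \<psi>_def by (auto intro!: derivative_eq_intros simp: inner_diff_left)
  qed
  have slope: "(g (x + s *\<^sub>R d) - g x) \<bullet> d \<le> L * s * (norm d)\<^sup>2" if "0 \<le> s" for s
  proof -
    have "(g (x + s *\<^sub>R d) - g x) \<bullet> d \<le> norm (g (x + s *\<^sub>R d) - g x) * norm d"
      by (rule norm_cauchy_schwarz)
    also have "\<dots> \<le> L * norm (s *\<^sub>R d) * norm d"
      using lip[of "x + s *\<^sub>R d" x] by (simp add: mult_right_mono)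
    finally show ?thesis using that by (simp add: power2_eq_square mult.assoc)
  qed
  have "\<psi> 1 \<le> \<psi> 0"
  proof (rule DERIV_nonpos_imp_nonincreasing[of 0 1 \<psi>])
    fix s :: real assume "0 \<le> s" "s \<le> 1"
    show "\<exists>y. (\<psi> has_real_derivative y) (at s) \<and> y \<le> 0"
      using \<psi>_deriv[of s] slope[OF \<open>0 \<le> s\<close>] by (intro exI conjI) (assumption, simp)
  qed simp
  then show ?thesis unfolding \<psi>_def d_def by simp
qed

lemma convex_on_above_tangent:
  fixes f :: "'a::real_normed_vector \<Rightarrow> real"
  assumes convex: "convex_on UNIV f" and deriv: "(f has_derivative D) (at x)"
  shows "f x + D (z - x) \<le> f z"
proof -
  define \<psi> where "\<psi> s = f (x + s *\<^sub>R (z - x))" for s :: real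
  have "convex_on UNIV \<psi>"
  proof (rule convex_onI)
    fix s s' u :: real assume "0 < u" "u < 1"
    have "x + ((1 - u) * s + u * s') *\<^sub>R (z - x)
        = (1 - u) *\<^sub>R (x + s *\<^sub>R (z - x)) + u *\<^sub>R (x + s' *\<^sub>R (z - x))"
      by (simp add: algebra_simps)
    with convex \<open>0 < u\<close> \<open>u < 1\<close> show "\<psi> ((1 - u) *\<^sub>R s + u *\<^sub>R s') \<le> (1 - u) * \<psi> s + u * \<psi> s'"
      unfolding \<psi>_def by (metis convex_onD UNIV_I real_scaleR_def less_imp_le)
  qed simp
  moreover have "(\<psi> has_real_derivative D (z - x)) (at 0)"
  proof -
    have "((\<lambda>s. x + s *\<^sub>R (z - x)) has_derivative (\<lambda>s. s *\<^sub>R (z - x))) (at 0)"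
      by (intro derivative_eq_intros) auto
    then have "(\<psi> has_derivative (\<lambda>s. D (s *\<^sub>R (z - x)))) (at 0)"
      unfolding \<psi>_def using deriv
      by (simp add: has_derivative_compose[of "\<lambda>s. x + s *\<^sub>R (z - x)" _ 0 UNIV f D])
    moreover have "(\<lambda>s. D (s *\<^sub>R (z - x))) = (*) (D (z - x))"
      using has_derivative_linear[OF deriv] by (simp add: fun_eq_iff linear_scale mult.commute)
    ultimately show ?thesis by (simp add: has_field_derivative_def)
  qed
  ultimately have "D (z - x) * (1 - 0) \<le> \<psi> 1 - \<psi> 0"
    by (intro convex_on_imp_above_tangent) auto
  then show ?thesis unfolding \<psi>_def by simp
qed

lemma strongly_convex_above_tangent:
  fixes f :: "'a::real_inner \<Rightarrow> real"
  assumes convex: "convex_on UNIV (\<lambda>x. f x - \<mu> / 2 * (norm x)\<^sup>2)"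
    and deriv: "(f has_derivative (\<lambda>h. g \<bullet> h)) (at x)"
  shows "f x + g \<bullet> (z - x) + \<mu> / 2 * (norm (z - x))\<^sup>2 \<le> f z"
proof -
  have "((\<lambda>x. f x - \<mu> / 2 * (norm x)\<^sup>2) has_derivative (\<lambda>h. g \<bullet> h - \<mu> * (x \<bullet> h))) (at x)"
    unfolding power2_norm_eq_inner using deriv
    by (auto intro!: derivative_eq_intros simp: inner_commute)
  from convex_on_above_tangent[OF convex this, of z] show ?thesis
    unfolding power2_norm_eq_inner by (simp add: inner_diff_left inner_diff_right inner_commute algebra_simps)
qed

text \<open>With d = x - x', G = g x - g x' - \<mu> d and the Bregman gap D = f x - f x' - g x' \<bullet> d, this is
  the interpolation inequality D \<ge> \<mu>/2 |d|^2 + |G|^2/(2K) of L-smooth \<mu>-strongly convex functions,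
  K = L - \<mu>, written without division so that it also covers K = 0.\<close>

definition interpolation_ineq :: "real \<Rightarrow> real \<Rightarrow> 'a::real_inner \<Rightarrow> 'a \<Rightarrow> real \<Rightarrow> bool" where
  "interpolation_ineq K \<mu> d G D \<longleftrightarrow> \<mu> * (d \<bullet> d) \<le> 2 * D \<and> G \<bullet> G \<le> K * (2 * D - \<mu> * (d \<bullet> d))"

definition satisfies_interpolation_ineq ::
    "real \<Rightarrow> real \<Rightarrow> ('a::real_inner \<Rightarrow> real) \<Rightarrow> ('a \<Rightarrow> 'a) \<Rightarrow> bool" where
  "satisfies_interpolation_ineq K \<mu> f g \<longleftrightarrow>
     (\<forall>x x'. interpolation_ineq K \<mu> (x - x') (g x - g x' - \<mu> *\<^sub>R (x - x')) (f x - f x' - g x' \<bullet> (x - x')))"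

lemma interpolation_ineq_mono:
  assumes "interpolation_ineq K \<mu> d G D" "K \<le> K'"
  shows "interpolation_ineq K' \<mu> d G D"
proof -
  have "K * (2 * D - \<mu> * (d \<bullet> d)) \<le> K' * (2 * D - \<mu> * (d \<bullet> d))"
    using assms by (intro mult_right_mono) (auto simp: interpolation_ineq_def)
  with assms(1) show ?thesis by (auto simp: interpolation_ineq_def)
qed

text \<open>The second inequality is the one for the pair (x', x), expressed through the data of (x, x').\<close>

lemma interpolation_ineq_both_ways:
  fixes f :: "'a::real_inner \<Rightarrow> real" and x x' :: 'a
  assumes "satisfies_interpolation_ineq K \<mu> f g"
  defines "d \<equiv> x - x'" and "G \<equiv> g x - g x' - \<mu> *\<^sub>R (x - x')" and "D \<equiv> f x - f x' - g x' \<bullet> (x - x')"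
  shows "interpolation_ineq K \<mu> d G D"
    and "interpolation_ineq K \<mu> d G (\<mu> * (d \<bullet> d) + d \<bullet> G - D)"
proof -
  show "interpolation_ineq K \<mu> d G D"
    using assms unfolding satisfies_interpolation_ineq_def by blast
  have "interpolation_ineq K \<mu> (x' - x) (g x' - g x - \<mu> *\<^sub>R (x' - x)) (f x' - f x - g x \<bullet> (x' - x))"
    using assms unfolding satisfies_interpolation_ineq_def by blast
  moreover have "x' - x = - d" and "g x' - g x - \<mu> *\<^sub>R (x' - x) = - G"
    and "f x' - f x - g x \<bullet> (x' - x) = \<mu> * (d \<bullet> d) + d \<bullet> G - D"
    unfolding d_def G_def D_def by (simp_all add: inner_simps inner_commute algebra_simps)
  ultimately have "interpolation_ineq K \<mu> (- d) (- G) (\<mu> * (d \<bullet> d) + d \<bullet> G - D)"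
    by (simp only:)
  then show "interpolation_ineq K \<mu> d G (\<mu> * (d \<bullet> d) + d \<bullet> G - D)"
    unfolding interpolation_ineq_def by simp
qed

lemma smooth_strongly_convex_interpolation:
  fixes f :: "'a::real_inner \<Rightarrow> real"
  assumes deriv: "\<And>x. (f has_derivative (\<lambda>h. g x \<bullet> h)) (at x)"
    and lip: "\<And>x y. norm (g x - g y) \<le> L * norm (x - y)"
    and strong: "\<And>x z. f x + g x \<bullet> (z - x) + \<mu> / 2 * (norm (z - x))\<^sup>2 \<le> f z"
    and "\<mu> \<le> L"
  shows "satisfies_interpolation_ineq (L - \<mu>) \<mu> f g"
  unfolding satisfies_interpolation_ineq_def interpolation_ineq_def
proof (intro allI conjI)
  fix x x' :: 'a
  define K d where "K = L - \<mu>" and "d = x - x'"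
  define G D where "G = g x - g x' - \<mu> *\<^sub>R d" and "D = f x - f x' - g x' \<bullet> d"
  define B where "B = 2 * D - \<mu> * (d \<bullet> d)"
  show "\<mu> * (d \<bullet> d) \<le> 2 * D"
    using strong[of x' x] unfolding D_def d_def by (simp add: power2_norm_eq_inner)
  \<comment> \<open>Compare the smoothness upper bound at x with the strong-convexity lower bound at x' at
    z = x - r G; the best step r = 1/K gives the claim, and for K = 0 let r grow.\<close>
  have step: "(2 * r - K * r\<^sup>2) * (G \<bullet> G) \<le> B" for r
  proof -
    define z where "z = x - r *\<^sub>R G"
    have "f x' + g x' \<bullet> (z - x') + \<mu> / 2 * (norm (z - x'))\<^sup>2 \<le> f z" by (rule strong)
    moreover have "f z \<le> f x + g x \<bullet> (z - x) + L / 2 * (norm (z - x))\<^sup>2"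
      by (rule lipschitz_gradient_upper_bound[OF deriv lip])
    moreover have "B - (2 * r - K * r\<^sup>2) * (G \<bullet> G)
       = (2 * f x + 2 * (g x \<bullet> (z - x)) + L * ((z - x) \<bullet> (z - x)))
         - (2 * f x' + 2 * (g x' \<bullet> (z - x')) + \<mu> * ((z - x') \<bullet> (z - x')))"
      unfolding B_def D_def K_def z_def G_def d_def
      by (simp add: inner_simps inner_commute algebra_simps power2_eq_square)
    ultimately show ?thesis by (simp add: power2_norm_eq_inner)
  qed
  have "K \<ge> 0" using \<open>\<mu> \<le> L\<close> by (simp add: K_def)
  have "G \<bullet> G \<le> K * B"
  proof (cases "K = 0")
    case True
    have "G \<bullet> G \<le> 0"
    proof (rule ccontr)
      assume "\<not> G \<bullet> G \<le> 0"
      with step[of "(\<bar>B\<bar> + 1) / (G \<bullet> G)"] True show False by (simp split: if_splits)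
    qed
    then show ?thesis using True by simp
  next
    case False
    with \<open>K \<ge> 0\<close> have "K > 0" by simp
    from step[of "1 / K"] have "(G \<bullet> G) / K \<le> B"
      using \<open>K > 0\<close> by (simp add: power2_eq_square field_simps)
    then show ?thesis using \<open>K > 0\<close> by (simp add: field_simps)
  qed
  then show "(g x - g x' - \<mu> *\<^sub>R (x - x')) \<bullet> (g x - g x' - \<mu> *\<^sub>R (x - x'))
      \<le> (L - \<mu>) * (2 * (f x - f x' - g x' \<bullet> (x - x')) - \<mu> * ((x - x') \<bullet> (x - x')))"
    unfolding G_def B_def D_def K_def d_def .
qed

definition gda_rate :: "real \<Rightarrow> real \<Rightarrow> real \<Rightarrow> real \<Rightarrow> real" where
  "gda_rate L \<mu> Lxy t = 1 + (L\<^sup>2 + \<mu>\<^sup>2 + 2 * Lxy\<^sup>2) * t\<^sup>2 / 2 - (L + \<mu>) * t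
      + (L - \<mu>) * t * sqrt ((L * t + \<mu> * t - 2)\<^sup>2 + 4 * Lxy\<^sup>2 * t\<^sup>2) / 2"

lemma gda_rate_eq:
  fixes L \<mu> Lxy t :: real
  defines "u \<equiv> L * t + \<mu> * t - 2"
  shows "gda_rate L \<mu> Lxy t
    = (1 - \<mu> * t)\<^sup>2 + (L - \<mu>) * t * (u + sqrt (u\<^sup>2 + 4 * Lxy\<^sup>2 * t\<^sup>2)) / 2 + Lxy\<^sup>2 * t\<^sup>2"
  unfolding gda_rate_def u_def by (simp add: field_simps power2_eq_square)

text \<open>In the application a = x1 - x*, b = y1 - y*; P and M are the differences of the x-gradient
  along a at the levels y1 and y*, shifted by \<mu> a, and q the change of the x-gradient at x* between
  these levels; R, N, s are the same for the negated y-gradient, and Dx, Dx', Dy, Dy' the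
  corresponding Bregman gaps. The multipliers come from the performance-estimation analysis; they
  are used with K = L - \<mu>, \<beta> = 1 - \<mu> t (so u = L t + \<mu> t - 2) and S = sqrt (u^2 + 4 Lxy^2 t^2),
  but as an identity it holds for every S.\<close>

lemma gda_certificate_identity:
  fixes a P M q :: "'a::real_inner" and b R N s :: "'b::real_inner"
    and K t \<beta> \<mu> S Dx Dx' Dy Dy' :: real
  defines "u \<equiv> K * t - 2 * \<beta>"
    and "Rx \<equiv> \<mu> * (a \<bullet> a) + a \<bullet> P - Dx" and "Rx' \<equiv> \<mu> * (a \<bullet> a) + a \<bullet> M - Dx'"
    and "Ry \<equiv> \<mu> * (b \<bullet> b) + b \<bullet> R - Dy" and "Ry' \<equiv> \<mu> * (b \<bullet> b) + b \<bullet> N - Dy'"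
  assumes "Dy' = a \<bullet> q - b \<bullet> s - Dx' + Dx + Dy"
  shows "2 * K * S * ((4 * \<beta>\<^sup>2 + 2 * K * t * (u + S) + (S\<^sup>2 - u\<^sup>2)) * (a \<bullet> a + b \<bullet> b)
      - 4 * ((\<beta> *\<^sub>R a - t *\<^sub>R P - t *\<^sub>R q) \<bullet> (\<beta> *\<^sub>R a - t *\<^sub>R P - t *\<^sub>R q)
           + (\<beta> *\<^sub>R b - t *\<^sub>R R + t *\<^sub>R s) \<bullet> (\<beta> *\<^sub>R b - t *\<^sub>R R + t *\<^sub>R s)))
    = 2 * t * (S + K * t) * (S + u) * ((K * (2 * Dx - \<mu> * (a \<bullet> a)) - P \<bullet> P) + (K * (2 * Rx' - \<mu> * (a \<bullet> a)) - M \<bullet> M)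
         + (K * (2 * Dy - \<mu> * (b \<bullet> b)) - R \<bullet> R) + (K * (2 * Ry' - \<mu> * (b \<bullet> b)) - N \<bullet> N))
    + 2 * t * (S + K * t) * (S - u) * ((K * (2 * Rx - \<mu> * (a \<bullet> a)) - P \<bullet> P) + (K * (2 * Dx' - \<mu> * (a \<bullet> a)) - M \<bullet> M)
         + (K * (2 * Ry - \<mu> * (b \<bullet> b)) - R \<bullet> R) + (K * (2 * Dy' - \<mu> * (b \<bullet> b)) - N \<bullet> N))
    + K * (S + K * t) * (((S\<^sup>2 - u\<^sup>2) * (b \<bullet> b) - 4 * t\<^sup>2 * (q \<bullet> q))
         + ((S\<^sup>2 - u\<^sup>2) * (a \<bullet> a) - 4 * t\<^sup>2 * (s \<bullet> s))
         + ((S\<^sup>2 - u\<^sup>2) * (b \<bullet> b) - 4 * t\<^sup>2 * ((P - M + q) \<bullet> (P - M + q)))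
         + ((S\<^sup>2 - u\<^sup>2) * (a \<bullet> a) - 4 * t\<^sup>2 * ((s - R + N) \<bullet> (s - R + N))))
    + 2 * t * (S + K * t)\<^sup>2 * ((P - M) \<bullet> (P - M) + (R - N) \<bullet> (R - N))
    + 2 * t * (((K * (S + u)) *\<^sub>R a - (S - K * t) *\<^sub>R P - (S + K * t) *\<^sub>R M + (2 * K * t) *\<^sub>R q)
          \<bullet> ((K * (S + u)) *\<^sub>R a - (S - K * t) *\<^sub>R P - (S + K * t) *\<^sub>R M + (2 * K * t) *\<^sub>R q))
    + 2 * t * (((K * (S + u)) *\<^sub>R b - (S - K * t) *\<^sub>R R - (S + K * t) *\<^sub>R N - (2 * K * t) *\<^sub>R s)
          \<bullet> ((K * (S + u)) *\<^sub>R b - (S - K * t) *\<^sub>R R - (S + K * t) *\<^sub>R N - (2 * K * t) *\<^sub>R s))"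
  unfolding assms by (simp add: inner_simps inner_commute algebra_simps power2_eq_square)

lemma gda_certificate_strict:
  fixes a P M q :: "'a::real_inner" and b R N s :: "'b::real_inner"
  assumes "\<mu> < L" "0 < Lxy" "0 < t"
    and "interpolation_ineq (L - \<mu>) \<mu> a P Dx" "interpolation_ineq (L - \<mu>) \<mu> a P (\<mu> * (a \<bullet> a) + a \<bullet> P - Dx)"
    and "interpolation_ineq (L - \<mu>) \<mu> a M Dx'" "interpolation_ineq (L - \<mu>) \<mu> a M (\<mu> * (a \<bullet> a) + a \<bullet> M - Dx')"
    and "interpolation_ineq (L - \<mu>) \<mu> b R Dy" "interpolation_ineq (L - \<mu>) \<mu> b R (\<mu> * (b \<bullet> b) + b \<bullet> R - Dy)"
    and "interpolation_ineq (L - \<mu>) \<mu> b N Dy'" "interpolation_ineq (L - \<mu>) \<mu> b N (\<mu> * (b \<bullet> b) + b \<bullet> N - Dy')"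
    and "Dy' = a \<bullet> q - b \<bullet> s - Dx' + Dx + Dy"
    and "norm q \<le> Lxy * norm b" "norm (P - M + q) \<le> Lxy * norm b"
    and "norm s \<le> Lxy * norm a" "norm (s - R + N) \<le> Lxy * norm a"
  shows "(norm (a - t *\<^sub>R (\<mu> *\<^sub>R a + P + q)))\<^sup>2 + (norm (b - t *\<^sub>R (\<mu> *\<^sub>R b + R - s)))\<^sup>2
    \<le> gda_rate L \<mu> Lxy t * ((norm a)\<^sup>2 + (norm b)\<^sup>2)"
proof -
  define K \<beta> u where "K = L - \<mu>" and "\<beta> = 1 - \<mu> * t" and "u = L * t + \<mu> * t - 2"
  define S where "S = sqrt (u\<^sup>2 + 4 * Lxy\<^sup>2 * t\<^sup>2)"
  have "u = K * t - 2 * \<beta>" by (simp add: K_def \<beta>_def u_def algebra_simps)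
  have "0 < K" using assms(1) by (simp add: K_def)
  have S_sq: "S\<^sup>2 - u\<^sup>2 = 4 * Lxy\<^sup>2 * t\<^sup>2" unfolding S_def by simp
  have "\<bar>u\<bar> < S"
    unfolding S_def using assms(2,3) by (intro real_less_rsqrt) (simp add: power2_eq_square)
  then have S_bounds: "0 < S" "0 \<le> S + u" "0 \<le> S - u" "0 \<le> S + K * t" using \<open>0 < K\<close> assms(3) by auto
  have interp: "0 \<le> K * (2 * D - \<mu> * (d \<bullet> d)) - G \<bullet> G" if "interpolation_ineq (L - \<mu>) \<mu> d G D" for d G :: "'c::real_inner" and D
    using that by (simp add: interpolation_ineq_def K_def)
  have cross: "0 \<le> (S\<^sup>2 - u\<^sup>2) * (d \<bullet> d) - 4 * t\<^sup>2 * (v \<bullet> v)" if "norm v \<le> Lxy * norm d" for v :: "'c::real_inner" and d :: "'d::real_inner"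
  proof -
    have "(norm v)\<^sup>2 \<le> (Lxy * norm d)\<^sup>2" using that by (simp add: power_mono)
    then have "v \<bullet> v \<le> Lxy\<^sup>2 * (d \<bullet> d)" by (simp add: power2_norm_eq_inner power_mult_distrib)
    from mult_left_mono[OF this, of "4 * t\<^sup>2"] show ?thesis unfolding S_sq by (simp add: algebra_simps)
  qed
  define A B C where "A = S + u" and "B = S - u" and "C = S + K * t"
  have "0 \<le> A" "0 \<le> B" "0 \<le> C" using S_bounds by (simp_all add: A_def B_def C_def)
  have "0 \<le> 2 * K * S * ((4 * \<beta>\<^sup>2 + 2 * K * t * (u + S) + (S\<^sup>2 - u\<^sup>2)) * (a \<bullet> a + b \<bullet> b)
      - 4 * ((\<beta> *\<^sub>R a - t *\<^sub>R P - t *\<^sub>R q) \<bullet> (\<beta> *\<^sub>R a - t *\<^sub>R P - t *\<^sub>R q)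
           + (\<beta> *\<^sub>R b - t *\<^sub>R R + t *\<^sub>R s) \<bullet> (\<beta> *\<^sub>R b - t *\<^sub>R R + t *\<^sub>R s)))"
    unfolding \<open>u = K * t - 2 * \<beta>\<close> gda_certificate_identity[OF assms(12), where \<mu> = \<mu> and M = M and N = N]
    unfolding \<open>u = K * t - 2 * \<beta>\<close>[symmetric] A_def[symmetric] B_def[symmetric] C_def[symmetric]
    using \<open>0 \<le> A\<close> \<open>0 \<le> B\<close> \<open>0 \<le> C\<close> \<open>0 < K\<close> \<open>0 < S\<close> assms(3)
    by (intro add_nonneg_nonneg mult_nonneg_nonneg interp cross inner_ge_zero assms; simp)
  then have "0 \<le> (4 * \<beta>\<^sup>2 + 2 * K * t * (u + S) + (S\<^sup>2 - u\<^sup>2)) * (a \<bullet> a + b \<bullet> b)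
      - 4 * ((\<beta> *\<^sub>R a - t *\<^sub>R P - t *\<^sub>R q) \<bullet> (\<beta> *\<^sub>R a - t *\<^sub>R P - t *\<^sub>R q)
           + (\<beta> *\<^sub>R b - t *\<^sub>R R + t *\<^sub>R s) \<bullet> (\<beta> *\<^sub>R b - t *\<^sub>R R + t *\<^sub>R s))"
    using mult_pos_pos[OF \<open>0 < K\<close> \<open>0 < S\<close>] by (simp add: zero_le_mult_iff)
  moreover have "4 * \<beta>\<^sup>2 + 2 * K * t * (u + S) + (S\<^sup>2 - u\<^sup>2) = 4 * gda_rate L \<mu> Lxy t"
    unfolding gda_rate_eq S_sq u_def[symmetric] S_def[symmetric] by (simp add: K_def \<beta>_def field_simps)
  moreover have "a - t *\<^sub>R (\<mu> *\<^sub>R a + P + q) = \<beta> *\<^sub>R a - t *\<^sub>R P - t *\<^sub>R q"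
    and "b - t *\<^sub>R (\<mu> *\<^sub>R b + R - s) = \<beta> *\<^sub>R b - t *\<^sub>R R + t *\<^sub>R s"
    by (simp_all add: \<beta>_def algebra_simps)
  ultimately show ?thesis by (simp add: power2_norm_eq_inner)
qed

lemma gda_certificate:
  fixes a P M q :: "'a::real_inner" and b R N s :: "'b::real_inner"
  assumes "\<mu> \<le> L" "0 \<le> Lxy" "0 < t"
    and "interpolation_ineq (L - \<mu>) \<mu> a P Dx" "interpolation_ineq (L - \<mu>) \<mu> a P (\<mu> * (a \<bullet> a) + a \<bullet> P - Dx)"
    and "interpolation_ineq (L - \<mu>) \<mu> a M Dx'" "interpolation_ineq (L - \<mu>) \<mu> a M (\<mu> * (a \<bullet> a) + a \<bullet> M - Dx')"
    and "interpolation_ineq (L - \<mu>) \<mu> b R Dy" "interpolation_ineq (L - \<mu>) \<mu> b R (\<mu> * (b \<bullet> b) + b \<bullet> R - Dy)"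
    and "interpolation_ineq (L - \<mu>) \<mu> b N Dy'" "interpolation_ineq (L - \<mu>) \<mu> b N (\<mu> * (b \<bullet> b) + b \<bullet> N - Dy')"
    and "Dy' = a \<bullet> q - b \<bullet> s - Dx' + Dx + Dy"
    and "norm q \<le> Lxy * norm b" "norm (P - M + q) \<le> Lxy * norm b"
    and "norm s \<le> Lxy * norm a" "norm (s - R + N) \<le> Lxy * norm a"
  shows "(norm (a - t *\<^sub>R (\<mu> *\<^sub>R a + P + q)))\<^sup>2 + (norm (b - t *\<^sub>R (\<mu> *\<^sub>R b + R - s)))\<^sup>2
    \<le> gda_rate L \<mu> Lxy t * ((norm a)\<^sup>2 + (norm b)\<^sup>2)" (is "?lhs \<le> _ * ?n")
proof -
  define f where "f e = gda_rate (L + e) \<mu> (Lxy + e) t * ?n" for e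
  have bound: "?lhs \<le> f e" if "0 < e" for e
  proof -
    have lift: "interpolation_ineq (L + e - \<mu>) \<mu> d G D" if "interpolation_ineq (L - \<mu>) \<mu> d G D"
      for d G :: "'c::real_inner" and D
      using interpolation_ineq_mono[OF that] \<open>0 < e\<close> by simp
    have lift_norm: "norm v \<le> (Lxy + e) * norm d" if "norm v \<le> Lxy * norm d"
      for v :: "'c::real_inner" and d :: "'d::real_inner"
      using that \<open>0 < e\<close> by (smt (verit) mult_right_mono norm_ge_zero)
    show ?thesis
      unfolding f_def using assms(1,2) \<open>0 < e\<close>
      by (intro gda_certificate_strict[where Dx = Dx and Dx' = Dx' and Dy = Dy and Dy' = Dy' and M = M and N = N]
          lift lift_norm assms(3-)) auto
  qed
  have "\<forall>\<^sub>F e in at_right 0. ?lhs \<le> f e"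
    by (rule eventually_mono[OF eventually_at_right_less]) (rule bound)
  moreover have "(f \<longlongrightarrow> f 0) (at_right 0)"
    unfolding f_def gda_rate_def by (intro tendsto_intros) auto
  ultimately have "?lhs \<le> f 0"
    using tendsto_lowerbound trivial_limit_at_right_real by blast
  then show ?thesis by (simp add: f_def)
qed

lemma gda_step_bound:
  fixes F :: "'a::real_inner \<Rightarrow> 'b::real_inner \<Rightarrow> real" and Gx :: "'a \<Rightarrow> 'b \<Rightarrow> 'a" and Gy :: "'a \<Rightarrow> 'b \<Rightarrow> 'b"
  assumes "\<mu> \<le> L" "0 \<le> Lxy" "0 < t"
    and interp_x: "\<And>y. satisfies_interpolation_ineq (L - \<mu>) \<mu> (\<lambda>x. F x y) (\<lambda>x. Gx x y)"
    and interp_y: "\<And>x. satisfies_interpolation_ineq (L - \<mu>) \<mu> (\<lambda>y. - F x y) (\<lambda>y. - Gy x y)"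
    and cross_x: "\<And>x y y'. norm (Gx x y - Gx x y') \<le> Lxy * norm (y - y')"
    and cross_y: "\<And>x x' y. norm (Gy x y - Gy x' y) \<le> Lxy * norm (x - x')"
    and "Gx xs ys = 0" "Gy xs ys = 0"
  shows "(norm (x1 - t *\<^sub>R Gx x1 y1 - xs))\<^sup>2 + (norm (y1 + t *\<^sub>R Gy x1 y1 - ys))\<^sup>2
    \<le> gda_rate L \<mu> Lxy t * ((norm (x1 - xs))\<^sup>2 + (norm (y1 - ys))\<^sup>2)"
proof -
  define a b where "a = x1 - xs" and "b = y1 - ys"
  define P M q where "P = Gx x1 y1 - Gx xs y1 - \<mu> *\<^sub>R a" and "M = Gx x1 ys - Gx xs ys - \<mu> *\<^sub>R a"
    and "q = Gx xs y1 - Gx xs ys"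
  define R N s where "R = - Gy x1 y1 - - Gy x1 ys - \<mu> *\<^sub>R b" and "N = - Gy xs y1 - - Gy xs ys - \<mu> *\<^sub>R b"
    and "s = Gy x1 ys - Gy xs ys"
  define Dx Dx' where "Dx = F x1 y1 - F xs y1 - Gx xs y1 \<bullet> a" and "Dx' = F x1 ys - F xs ys - Gx xs ys \<bullet> a"
  define Dy Dy' where "Dy = - F x1 y1 - - F x1 ys - - Gy x1 ys \<bullet> b"
    and "Dy' = - F xs y1 - - F xs ys - - Gy xs ys \<bullet> b"
  have "interpolation_ineq (L - \<mu>) \<mu> a P Dx" "interpolation_ineq (L - \<mu>) \<mu> a P (\<mu> * (a \<bullet> a) + a \<bullet> P - Dx)"
    using interpolation_ineq_both_ways[OF interp_x[of y1], where x = x1 and x' = xs]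
    by (simp_all add: a_def P_def Dx_def)
  moreover have "interpolation_ineq (L - \<mu>) \<mu> a M Dx'" "interpolation_ineq (L - \<mu>) \<mu> a M (\<mu> * (a \<bullet> a) + a \<bullet> M - Dx')"
    using interpolation_ineq_both_ways[OF interp_x[of ys], where x = x1 and x' = xs]
    by (simp_all add: a_def M_def Dx'_def)
  moreover have "interpolation_ineq (L - \<mu>) \<mu> b R Dy" "interpolation_ineq (L - \<mu>) \<mu> b R (\<mu> * (b \<bullet> b) + b \<bullet> R - Dy)"
    using interpolation_ineq_both_ways[OF interp_y[of x1], where x = y1 and x' = ys]
    by (simp_all add: b_def R_def Dy_def)
  moreover have "interpolation_ineq (L - \<mu>) \<mu> b N Dy'" "interpolation_ineq (L - \<mu>) \<mu> b N (\<mu> * (b \<bullet> b) + b \<bullet> N - Dy')"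
    using interpolation_ineq_both_ways[OF interp_y[of xs], where x = y1 and x' = ys]
    by (simp_all add: b_def N_def Dy'_def)
  moreover have "Dy' = a \<bullet> q - b \<bullet> s - Dx' + Dx + Dy"
    by (simp add: Dx_def Dx'_def Dy_def Dy'_def q_def s_def inner_simps inner_commute)
  moreover have "norm q \<le> Lxy * norm b" "norm (P - M + q) \<le> Lxy * norm b"
    using cross_x[of xs y1 ys] cross_x[of x1 y1 ys] by (simp_all add: P_def M_def q_def b_def)
  moreover have "norm s \<le> Lxy * norm a" "norm (s - R + N) \<le> Lxy * norm a"
    using cross_y[of x1 ys xs] cross_y[of x1 y1 xs] by (simp_all add: R_def N_def s_def a_def)
  ultimately have "(norm (a - t *\<^sub>R (\<mu> *\<^sub>R a + P + q)))\<^sup>2 + (norm (b - t *\<^sub>R (\<mu> *\<^sub>R b + R - s)))\<^sup>2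
      \<le> gda_rate L \<mu> Lxy t * ((norm a)\<^sup>2 + (norm b)\<^sup>2)"
    using assms(1-3) by (intro gda_certificate)
  moreover have "a - t *\<^sub>R (\<mu> *\<^sub>R a + P + q) = x1 - t *\<^sub>R Gx x1 y1 - xs"
    and "b - t *\<^sub>R (\<mu> *\<^sub>R b + R - s) = y1 + t *\<^sub>R Gy x1 y1 - ys"
    using \<open>Gx xs ys = 0\<close> \<open>Gy xs ys = 0\<close> by (simp_all add: a_def b_def P_def q_def R_def s_def algebra_simps)
  ultimately show ?thesis by (simp only: a_def b_def)
qed

lemma func_classD:
  assumes "F \<in> func_class Lx Ly Lxy mux muy"
  shows func_class_differentiable: "(\<lambda>(x, y). F x y) differentiable (at p)"
    and func_class_lipschitz_x: "norm (grad_x F x y - grad_x F x' y) \<le> Lx * norm (x - x')"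
    and func_class_lipschitz_y: "norm (grad_y F x y - grad_y F x y') \<le> Ly * norm (y - y')"
    and func_class_cross_x: "norm (grad_x F x y - grad_x F x y') \<le> Lxy * norm (y - y')"
    and func_class_cross_y: "norm (grad_y F x y - grad_y F x' y) \<le> Lxy * norm (x - x')"
    and func_class_convex: "convex_on UNIV (\<lambda>x. F x y - mux / 2 * (norm x)\<^sup>2)"
    and func_class_concave: "concave_on UNIV (\<lambda>y. F x y + muy / 2 * (norm y)\<^sup>2)"
  using assms unfolding func_class_def by blast+

lemma func_class_has_derivative_x:
  assumes "F \<in> func_class Lx Ly Lxy mux muy"
  shows "((\<lambda>x. F x y) has_derivative (\<lambda>h. grad_x F x y \<bullet> h)) (at x)"
proof -
  obtain D where "((\<lambda>(x, y). F x y) has_derivative D) (at (x, y))"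
    using func_class_differentiable[OF assms] unfolding differentiable_def by blast
  moreover have "((\<lambda>x. (x, y)) has_derivative (\<lambda>h. (h, 0))) (at x)"
    by (intro derivative_eq_intros) auto
  ultimately have "((\<lambda>x. F x y) has_derivative (\<lambda>h. D (h, 0))) (at x)"
    using has_derivative_compose by fastforce
  then show ?thesis unfolding grad_x_def by (rule has_derivative_the_gradient)
qed

lemma func_class_has_derivative_y:
  assumes "F \<in> func_class Lx Ly Lxy mux muy"
  shows "((\<lambda>y. F x y) has_derivative (\<lambda>h. grad_y F x y \<bullet> h)) (at y)"
proof -
  obtain D where "((\<lambda>(x, y). F x y) has_derivative D) (at (x, y))"
    using func_class_differentiable[OF assms] unfolding differentiable_def by blast
  moreover have "((\<lambda>y. (x, y)) has_derivative (\<lambda>h. (0, h))) (at y)"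
    by (intro derivative_eq_intros) auto
  ultimately have "((\<lambda>y. F x y) has_derivative (\<lambda>h. D (0, h))) (at y)"
    using has_derivative_compose by fastforce
  then show ?thesis unfolding grad_y_def by (rule has_derivative_the_gradient)
qed

lemma func_class_interpolation_x:
  assumes F: "F \<in> func_class Lx Ly Lxy mux muy" and "Lx \<le> L" "\<mu> \<le> mux" "\<mu> \<le> L"
  shows "satisfies_interpolation_ineq (L - \<mu>) \<mu> (\<lambda>x. F x y) (\<lambda>x. grad_x F x y)"
proof (rule smooth_strongly_convex_interpolation)
  show deriv: "((\<lambda>x. F x y) has_derivative (\<lambda>h. grad_x F x y \<bullet> h)) (at x)" for x
    using F by (rule func_class_has_derivative_x)
  show "norm (grad_x F x y - grad_x F x' y) \<le> L * norm (x - x')" for x x'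
    using func_class_lipschitz_x[OF F] mult_right_mono[OF \<open>Lx \<le> L\<close> norm_ge_zero] by (rule order_trans)
  show "F x y + grad_x F x y \<bullet> (z - x) + \<mu> / 2 * (norm (z - x))\<^sup>2 \<le> F z y" for x z
  proof -
    have "F x y + grad_x F x y \<bullet> (z - x) + mux / 2 * (norm (z - x))\<^sup>2 \<le> F z y"
      using func_class_convex[OF F] deriv by (rule strongly_convex_above_tangent)
    moreover have "\<mu> / 2 * (norm (z - x))\<^sup>2 \<le> mux / 2 * (norm (z - x))\<^sup>2"
      using \<open>\<mu> \<le> mux\<close> by (intro mult_right_mono) auto
    ultimately show ?thesis by linarith
  qed
qed fact

lemma func_class_interpolation_y:
  assumes F: "F \<in> func_class Lx Ly Lxy mux muy" and "Ly \<le> L" "\<mu> \<le> muy" "\<mu> \<le> L"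
  shows "satisfies_interpolation_ineq (L - \<mu>) \<mu> (\<lambda>y. - F x y) (\<lambda>y. - grad_y F x y)"
proof (rule smooth_strongly_convex_interpolation)
  show deriv: "((\<lambda>y. - F x y) has_derivative (\<lambda>h. - grad_y F x y \<bullet> h)) (at y)" for y
    using has_derivative_minus[OF func_class_has_derivative_y[OF F]] by simp
  show "norm (- grad_y F x y - - grad_y F x y') \<le> L * norm (y - y')" for y y'
    using func_class_lipschitz_y[OF F, of x y' y] mult_right_mono[OF \<open>Ly \<le> L\<close> norm_ge_zero, of "y - y'"]
    by (simp add: norm_minus_commute)
  show "- F x y + - grad_y F x y \<bullet> (z - y) + \<mu> / 2 * (norm (z - y))\<^sup>2 \<le> - F x z" for y z
  proof -
    have "convex_on UNIV (\<lambda>y. - F x y - muy / 2 * (norm y)\<^sup>2)"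
      using func_class_concave[OF F] unfolding concave_on_def by (simp add: algebra_simps)
    from strongly_convex_above_tangent[OF this deriv]
    have "- F x y + - grad_y F x y \<bullet> (z - y) + muy / 2 * (norm (z - y))\<^sup>2 \<le> - F x z" .
    moreover have "\<mu> / 2 * (norm (z - y))\<^sup>2 \<le> muy / 2 * (norm (z - y))\<^sup>2"
      using \<open>\<mu> \<le> muy\<close> by (intro mult_right_mono) auto
    ultimately show ?thesis by linarith
  qed
qed fact

lemma saddle_point_gradients_eq_0:
  assumes F: "F \<in> func_class Lx Ly Lxy mux muy" and "is_saddle_point F xs ys"
  shows "grad_x F xs ys = 0" and "grad_y F xs ys = 0"
proof -
  show "grad_x F xs ys = 0"
    using assms(2) unfolding is_saddle_point_def
    by (intro gradient_eq_0_at_minimum[OF func_class_has_derivative_x[OF F]]) blast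
  have "- grad_y F xs ys = 0"
    using assms(2) has_derivative_minus[OF func_class_has_derivative_y[OF F, of xs ys]]
    unfolding is_saddle_point_def by (intro gradient_eq_0_at_minimum[where f = "\<lambda>y. - F xs y"]) auto
  then show "grad_y F xs ys = 0" by simp
qed

theorem theorem2p2:
  fixes F :: "'n::euclidean_space \<Rightarrow> 'm::euclidean_space \<Rightarrow> real"
    and Lx Ly Lxy mux muy t :: real
    and xs x1 :: 'n and ys y1 :: 'm
  assumes "Lx > 0" "Ly > 0" "Lxy \<ge> 0"
    and "0 < mux" "mux \<le> Lx" "0 < muy" "muy \<le> Ly"
    and "F \<in> func_class Lx Ly Lxy mux muy"
    and "is_saddle_point F xs ys"
    and "0 < t" "t < 2 * min mux muy / (min mux muy * max Lx Ly + Lxy\<^sup>2)"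
  shows
    "let L = max Lx Ly; \<mu> = min mux muy;
         x2 = x1 - t *\<^sub>R grad_x F x1 y1;
         y2 = y1 + t *\<^sub>R grad_y F x1 y1;
         \<alpha> = 1 + (L\<^sup>2 + \<mu>\<^sup>2 + 2 * Lxy\<^sup>2) * t\<^sup>2 / 2 - (L + \<mu>) * t
             + (L - \<mu>) * t * sqrt ((L * t + \<mu> * t - 2)\<^sup>2 + 4 * Lxy\<^sup>2 * t\<^sup>2) / 2
     in (norm (x2 - xs))\<^sup>2 + (norm (y2 - ys))\<^sup>2
          \<le> \<alpha> * ((norm (x1 - xs))\<^sup>2 + (norm (y1 - ys))\<^sup>2)"
proof -
  define L \<mu> where "L = max Lx Ly" and "\<mu> = min mux muy"
  have "\<mu> \<le> mux" "\<mu> \<le> muy" "Lx \<le> L" "Ly \<le> L" "\<mu> \<le> L"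
    using assms(5) by (auto simp: L_def \<mu>_def)
  note F = assms(8)
  have "(norm (x1 - t *\<^sub>R grad_x F x1 y1 - xs))\<^sup>2 + (norm (y1 + t *\<^sub>R grad_y F x1 y1 - ys))\<^sup>2
      \<le> gda_rate L \<mu> Lxy t * ((norm (x1 - xs))\<^sup>2 + (norm (y1 - ys))\<^sup>2)"
  proof (rule gda_step_bound)
    show "satisfies_interpolation_ineq (L - \<mu>) \<mu> (\<lambda>x. F x y) (\<lambda>x. grad_x F x y)" for y
      using F \<open>Lx \<le> L\<close> \<open>\<mu> \<le> mux\<close> \<open>\<mu> \<le> L\<close> by (rule func_class_interpolation_x)
    show "satisfies_interpolation_ineq (L - \<mu>) \<mu> (\<lambda>y. - F x y) (\<lambda>y. - grad_y F x y)" for x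
      using F \<open>Ly \<le> L\<close> \<open>\<mu> \<le> muy\<close> \<open>\<mu> \<le> L\<close> by (rule func_class_interpolation_y)
    show "norm (grad_x F x y - grad_x F x y') \<le> Lxy * norm (y - y')"
      and "norm (grad_y F x y - grad_y F x' y) \<le> Lxy * norm (x - x')" for x x' y y'
      using func_class_cross_x[OF F] func_class_cross_y[OF F] .
    show "grad_x F xs ys = 0" "grad_y F xs ys = 0"
      using F assms(9) by (rule saddle_point_gradients_eq_0)+
  qed (use \<open>\<mu> \<le> L\<close> assms(3,10) in auto)
  then show ?thesis unfolding Let_def gda_rate_def L_def \<mu>_def .
qed

end
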